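(* Let $a$ be a finite set, $\eta<\omega_1$, and $(R^{(\rho)})_{\rho\leq\eta}$ a resolution family of tree relations on $a^{<\omega}$ with $R^{(0)}=\prec$. Let $\rho<\eta$ and $s,s',s''\in a^{<\omega}$ with $s\prec s'\,R^{(\rho)}\,s''$ and $s\,R^{(\rho+1)}\,s''$. Then $s\,R^{(\rho+1)}\,s'$.
   Context: $\prec$ is the non-strict extension (initial segment) relation on $a^{<\omega}$. A partial order $R$ on $a^{<\omega}$ is a tree relation if for every $t\in a^{<\omega}$: $\emptyset\,R\,t$, and the set $\{s\in a^{<\omega}: s\,R\,t\}$ is finite and linearly ordered by $R$. If $R\subseteq S$ are tree relations, $R$ is distinguished in $S$ if for all $s,t,u$: $s\,S\,t\,S\,u$ and $s\,R\,u$ imply $s\,R\,t$. A family $(R^{(\rho)})_{\rho\leq\eta}$ of tree relations is a resolution family if $R^{(\rho+1)}$ is a distinguished subtree relation of $R^{(\rho)}$ (i.e. $R^{(\rho+1)}\subseteq R^{(\rho)}$ and distinguished in it) for each $\rho<\eta$, and $R^{(\lambda)}=\bigcap_{\rho<\lambda}R^{(\rho)}$ for each limit $\lambda\leq\eta$. *)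

theory Defs
  imports Main "HOL-Library.Sublist" "HOL-Library.Countable_Set"
begin

text \<open>Finite sequences over the alphabet a: the set lists a. Relations on a^{<omega}
  are sets of pairs. The non-strict extension (initial segment) relation:\<close>
definition prefix_rel :: "'a set \<Rightarrow> ('a list \<times> 'a list) set" where
  "prefix_rel a = {(s, t). s \<in> lists a \<and> t \<in> lists a \<and> prefix s t}"

definition tree_relation :: "'a set \<Rightarrow> ('a list \<times> 'a list) set \<Rightarrow> bool" where
  "tree_relation a R \<longleftrightarrow> partial_order_on (lists a) R \<and>
     (\<forall>t \<in> lists a. ([], t) \<in> R \<and>
        finite {s \<in> lists a. (s, t) \<in> R} \<and>
        total_on {s \<in> lists a. (s, t) \<in> R} R)"

definition distinguished :: "('a list \<times> 'a list) set \<Rightarrow> ('a list \<times> 'a list) set \<Rightarrow> bool" where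
  "distinguished R S \<longleftrightarrow>
     (\<forall>s t u. (s, t) \<in> S \<and> (t, u) \<in> S \<and> (s, u) \<in> R \<longrightarrow> (s, t) \<in> R)"

definition distinguished_subtree :: "'a set \<Rightarrow> ('a list \<times> 'a list) set \<Rightarrow> ('a list \<times> 'a list) set \<Rightarrow> bool" where
  "distinguished_subtree a R S \<longleftrightarrow> tree_relation a R \<and> tree_relation a S \<and> R \<subseteq> S \<and> distinguished R S"

text \<open>Ordinals up to eta are represented by an initial segment of a well-order.\<close>
definition ozero :: "'o::wellorder" where
  "ozero = (LEAST x. True)"

definition osucc :: "'o::wellorder \<Rightarrow> 'o" where
  "osucc r = (LEAST x. r < x)"

definition olimit :: "'o::wellorder \<Rightarrow> bool" where
  "olimit l \<longleftrightarrow> (\<exists>r. r < l) \<and> (\<forall>r < l. osucc r < l)"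

definition resolution_family :: "'a set \<Rightarrow> 'o::wellorder \<Rightarrow> ('o \<Rightarrow> ('a list \<times> 'a list) set) \<Rightarrow> bool" where
  "resolution_family a \<eta> R \<longleftrightarrow>
     (\<forall>r \<le> \<eta>. tree_relation a (R r)) \<and>
     (\<forall>r < \<eta>. distinguished_subtree a (R (osucc r)) (R r)) \<and>
     (\<forall>l \<le> \<eta>. olimit l \<longrightarrow> R l = (\<Inter>r \<in> {r. r < l}. R r))"

end

theory Submission
  imports Defs
begin

text \<open>By induction along the well-order, every relation of a resolution family starting at the
  extension relation is contained in it. A tree relation contained in the extension relation
  agrees with it on the predecessors of any node, so s \<prec> s' forces s R(\<rho>) s'; since
  R(\<rho>+1) is distinguished in R(\<rho>), s R(\<rho>+1) s'' then yields s R(\<rho>+1) s'.\<close>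

lemma ozero_le: "ozero \<le> (x::'o::wellorder)"
  unfolding ozero_def by (rule Least_le) simp

lemma osucc_le: "q < (r::'o::wellorder) \<Longrightarrow> osucc q \<le> r"
  unfolding osucc_def by (rule Least_le)

lemma le_osucc_iff: "q < (r::'o::wellorder) \<Longrightarrow> p < osucc q \<longleftrightarrow> p \<le> q"
  unfolding osucc_def by (metis LeastI not_less_Least le_less_trans not_le)

lemma ozero_or_osucc_or_olimit:
  fixes r :: "'o::wellorder"
  obtains "r = ozero" | q where "q < r" "r = osucc q" | "olimit r"
proof -
  consider "r = ozero" | "\<exists>q<r. osucc q = r" | "r \<noteq> ozero" "\<forall>q<r. osucc q \<noteq> r"
    by blast
  then show ?thesis
  proof cases
    case 3
    then have "ozero < r" using ozero_le[of r] by (simp add: order_le_less)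
    moreover have "osucc q < r" if "q < r" for q
      using osucc_le[OF that] 3(2) that by (auto simp: order_le_less)
    ultimately have "olimit r" unfolding olimit_def by blast
    then show ?thesis by (rule that(3))
  qed (use that in auto)
qed

lemma resolution_family_antimono:
  fixes R :: "'o::wellorder \<Rightarrow> ('a list \<times> 'a list) set"
  assumes rf: "resolution_family a \<eta> R"
  shows "q \<le> r \<Longrightarrow> r \<le> \<eta> \<Longrightarrow> R r \<subseteq> R q"
proof (induction r rule: less_induct)
  case (less r)
  show ?case
  proof (cases "q = r")
    case False
    with less.prems have "q < r" by simp
    show ?thesis
    proof (cases r rule: ozero_or_osucc_or_olimit)
      case 1
      then show ?thesis using \<open>q < r\<close> ozero_le[of q] by simp
    next
      case (2 p)
      have "R (osucc p) \<subseteq> R p"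
        using rf 2 less.prems(2) unfolding resolution_family_def distinguished_subtree_def by auto
      moreover have "q \<le> p" using \<open>q < r\<close> 2 le_osucc_iff by blast
      then have "R p \<subseteq> R q" using less.IH[OF 2(1)] 2 less.prems(2) by simp
      ultimately show ?thesis using 2 by simp
    next
      case 3
      then have "R r = (\<Inter>p \<in> {p. p < r}. R p)"
        using rf less.prems(2) unfolding resolution_family_def by blast
      then show ?thesis using \<open>q < r\<close> by blast
    qed
  qed simp
qed

lemma resolution_family_subset_prefix_rel:
  assumes "resolution_family a \<eta> R" "R ozero = prefix_rel a" "r \<le> \<eta>"
  shows "R r \<subseteq> prefix_rel a"
  using resolution_family_antimono[OF assms(1) ozero_le assms(3)] assms(2) by simp

lemma tree_relation_below_prefix_rel:
  assumes tree: "tree_relation a S" and sub: "S \<subseteq> prefix_rel a"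
    and "(s, s') \<in> prefix_rel a" "(s', s'') \<in> S" "(s, s'') \<in> S"
  shows "(s, s') \<in> S"
proof (cases "s = s'")
  case True
  have "refl_on (lists a) S"
    using tree unfolding tree_relation_def partial_order_on_def preorder_on_def by blast
  then show ?thesis using True assms(3) unfolding refl_on_def prefix_rel_def by blast
next
  case False
  have "s \<in> lists a" "s' \<in> lists a" "s'' \<in> lists a"
    using assms(3,4) sub unfolding prefix_rel_def by auto
  then have "(s, s') \<in> S \<or> (s', s) \<in> S"
    using tree False assms(4,5) unfolding tree_relation_def total_on_def by blast
  moreover have "(s', s) \<notin> S"
    using sub assms(3) False prefix_order.antisym unfolding prefix_rel_def by blast
  ultimately show ?thesis by blast
qed

theorem lemma2p3p2:
  fixes a :: "'a set" and \<eta> :: "'o::wellorder"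
    and R :: "'o \<Rightarrow> ('a list \<times> 'a list) set"
  assumes "finite a"
    and "countable {r. r \<le> \<eta>}"
    and "resolution_family a \<eta> R"
    and "R ozero = prefix_rel a"
    and "\<rho> < \<eta>"
    and "s \<in> lists a" and "s' \<in> lists a" and "s'' \<in> lists a"
    and "(s, s') \<in> prefix_rel a" and "(s', s'') \<in> R \<rho>"
    and "(s, s'') \<in> R (osucc \<rho>)"
  shows "(s, s') \<in> R (osucc \<rho>)"
proof -
  have ds: "distinguished_subtree a (R (osucc \<rho>)) (R \<rho>)"
    using assms(3,5) unfolding resolution_family_def by blast
  have "R \<rho> \<subseteq> prefix_rel a"
    using resolution_family_subset_prefix_rel[OF assms(3,4)] assms(5) by simp
  moreover have "(s, s'') \<in> R \<rho>"
    using ds assms(11) unfolding distinguished_subtree_def by blast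
  ultimately have "(s, s') \<in> R \<rho>"
    using tree_relation_below_prefix_rel ds assms(9,10) unfolding distinguished_subtree_def by blast
  then show ?thesis
    using ds assms(10,11) unfolding distinguished_subtree_def distinguished_def by blast
qed

end
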